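(* Let $k\geq 1$ be an integer. The Laplacian spectrum of the spider $T(k,k)$ is $$\{0^{[1]},\ \theta^{[k-1]},\ \lambda_1^{[1]},\ \overline{\theta}^{[k-1]},\ \lambda_2^{[1]}\},$$ where $\theta=\frac{3-\sqrt{5}}{2}$, $\overline{\theta}=\frac{3+\sqrt{5}}{2}$, and $\lambda_1,\lambda_2$ are the roots of $x^2-(k+3)x+2k+1$.
   Context: For a graph $G$, the Laplacian matrix is $L(G)=D(G)-A(G)$, with $D(G)$ the diagonal degree matrix and $A(G)$ the adjacency matrix; its Laplacian spectrum is the multiset of eigenvalues of $L(G)$, and $a^{[m]}$ denotes the eigenvalue $a$ with multiplicity $m$. For integers $1\leq k\leq s$, the spider $T(s,k)$ is the tree obtained from the star $K_{1,s}$ by extending $k$ of its $s$ rays by one extra edge each; it has $s+k+1$ vertices. *)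

theory Defs
  imports "Jordan_Normal_Form.Char_Poly" "HOL-Computational_Algebra.Polynomial"
begin

text \<open>Simple graphs on vertex set {0..<n} given by a symmetric irreflexive relation.\<close>

definition degree_in :: "nat \<Rightarrow> (nat \<Rightarrow> nat \<Rightarrow> bool) \<Rightarrow> nat \<Rightarrow> nat" where
  "degree_in n adj i = card {j. j < n \<and> adj i j}"

definition laplacian :: "nat \<Rightarrow> (nat \<Rightarrow> nat \<Rightarrow> bool) \<Rightarrow> real mat" where
  "laplacian n adj = mat n n (\<lambda>(i,j).
      (if i = j then real (degree_in n adj i) else 0) - (if adj i j then 1 else 0))"

definition laplacian_spectrum :: "nat \<Rightarrow> (nat \<Rightarrow> nat \<Rightarrow> bool) \<Rightarrow> real multiset" where
  "laplacian_spectrum n adj = proots (char_poly (laplacian n adj))"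

text \<open>Spider T(s,k): centre 0, ray vertices 1..s adjacent to 0, and for
  i = 1..k the extra vertex s+i adjacent to i. It has s+k+1 vertices.\<close>
definition spider_edge :: "nat \<Rightarrow> nat \<Rightarrow> nat \<Rightarrow> nat \<Rightarrow> bool" where
  "spider_edge s k i j \<longleftrightarrow>
     (i = 0 \<and> 1 \<le> j \<and> j \<le> s) \<or> (1 \<le> i \<and> i \<le> k \<and> j = s + i)"

definition spider_adj :: "nat \<Rightarrow> nat \<Rightarrow> nat \<Rightarrow> nat \<Rightarrow> bool" where
  "spider_adj s k i j \<longleftrightarrow> spider_edge s k i j \<or> spider_edge s k j i"

definition spider_vertices :: "nat \<Rightarrow> nat \<Rightarrow> nat" where
  "spider_vertices s k = s + k + 1"

end

theory Submission
  imports Defs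
begin

text \<open>
  Number the vertices of a forest so that every vertex has at most one smaller neighbour, its
  parent. Gaussian elimination of \<open>x I - L\<close> from the leaves towards the roots then factors it
  as a unit upper triangular matrix times a lower triangular one whose diagonal carries the
  pivots \<open>p i = x - deg i - (\<Sum>l child of i. 1 / p l)\<close>, so the characteristic polynomial of the
  Laplacian is the product of the pivots wherever none of them vanishes.

  For the spider \<open>T(s,k)\<close> the pivots are \<open>a = x - 1\<close> at the feet and at the short legs,
  \<open>d = x - 2 - 1/a\<close> at the knees of the long legs and \<open>x - s - k/d - (s - k)/a\<close> at the centre.
  Since \<open>d a = x\<^sup>2 - 3x + 1\<close>, for \<open>s = k\<close> the product of the pivots is
  \<open>x (x\<^sup>2 - 3x + 1)\<^bsup>k-1\<^esup> (x\<^sup>2 - (k+3)x + 2k + 1)\<close> for all but finitely many \<open>x\<close>, hence identically,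
  and its roots are the claimed spectrum.
\<close>

lemma poly_eqI_cofinite:
  fixes p q :: "'a::{idom, ring_char_0} poly"
  assumes "finite S" and "\<And>x. x \<notin> S \<Longrightarrow> poly p x = poly q x"
  shows "p = q"
proof (rule ccontr)
  assume "p \<noteq> q"
  then have "finite (S \<union> {x. poly (p - q) x = 0})"
    using assms(1) poly_roots_finite[of "p - q"] by simp
  moreover have "UNIV = S \<union> {x. poly (p - q) x = 0}"
    using assms(2) by auto
  ultimately show False
    using infinite_UNIV_char_0 by metis
qed

lemma proots_monic_quadratic:
  fixes b c l1 l2 :: "'a::{idom, ring_char_0}"
  assumes "\<And>x. x\<^sup>2 + b * x + c = (x - l1) * (x - l2)"
  shows "proots [:c, b, 1:] = {#l1, l2#}"
proof -
  have "poly [:c, b, 1:] x = poly ([:- l1, 1:] * [:- l2, 1:]) x" for x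
    using assms[of x] by (simp add: algebra_simps power2_eq_square)
  then have factors: "[:c, b, 1:] = [:- l1, 1:] * [:- l2, 1:]"
    by (intro poly_eqI_cofinite[of "{}"]) simp_all
  show ?thesis
    unfolding factors by (subst proots_mult) auto
qed

lemma prod_if_le_split:
  fixes u v :: "'a::comm_monoid_mult"
  assumes "k \<le> m"
  shows "(\<Prod>i\<in>{1..m}. if i \<le> k then u else v) = u ^ k * v ^ (m - k)"
proof -
  have "{1..m} \<inter> {i. i \<le> k} = {1..k}" "{1..m} \<inter> - {i. i \<le> k} = {k<..m}"
    using assms by auto
  then show ?thesis
    by (simp add: prod.If_cases)
qed

lemma sum_if_le_split:
  fixes u v :: "'a::semiring_1"
  assumes "k \<le> m"
  shows "(\<Sum>i\<in>{1..m}. if i \<le> k then u else v) = of_nat k * u + of_nat (m - k) * v"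
proof -
  have "{1..m} \<inter> {i. i \<le> k} = {1..k}" "{1..m} \<inter> - {i. i \<le> k} = {k<..m}"
    using assms by auto
  then show ?thesis
    by (simp add: sum.If_cases)
qed

definition pivot_upper ::
    "nat \<Rightarrow> (nat \<Rightarrow> nat \<Rightarrow> bool) \<Rightarrow> (nat \<Rightarrow> real) \<Rightarrow> real mat" where
  "pivot_upper n adj p =
     mat n n (\<lambda>(i, l). if l = i then 1 else if i < l \<and> adj i l then 1 / p l else 0)"

definition pivot_lower ::
    "nat \<Rightarrow> (nat \<Rightarrow> nat \<Rightarrow> bool) \<Rightarrow> (nat \<Rightarrow> real) \<Rightarrow> real mat" where
  "pivot_lower n adj p =
     mat n n (\<lambda>(l, j). if j = l then p l else if j < l \<and> adj l j then 1 else 0)"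

lemma pivot_upper_carrier: "pivot_upper n adj p \<in> carrier_mat n n"
  by (simp add: pivot_upper_def)

lemma pivot_lower_carrier: "pivot_lower n adj p \<in> carrier_mat n n"
  by (simp add: pivot_lower_def)

lemma det_pivot_upper: "det (pivot_upper n adj p) = 1"
proof -
  have "det (pivot_upper n adj p) = prod_list (diag_mat (pivot_upper n adj p))"
    by (rule det_upper_triangular[OF _ pivot_upper_carrier])
      (auto simp: upper_triangular_def pivot_upper_def)
  also have "diag_mat (pivot_upper n adj p) = replicate n 1"
    by (rule nth_equalityI) (auto simp: diag_mat_def pivot_upper_def)
  finally show ?thesis by simp
qed

lemma det_pivot_lower: "det (pivot_lower n adj p) = (\<Prod>i<n. p i)"
proof -
  have "det (pivot_lower n adj p) = prod_list (diag_mat (pivot_lower n adj p))"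
    by (rule det_lower_triangular[OF _ pivot_lower_carrier]) (auto simp: pivot_lower_def)
  also have "diag_mat (pivot_lower n adj p) = map p [0..<n]"
    by (rule nth_equalityI) (auto simp: diag_mat_def pivot_lower_def)
  finally show ?thesis by (simp add: prod.list_conv_set_nth lessThan_atLeast0)
qed

definition children :: "nat \<Rightarrow> (nat \<Rightarrow> nat \<Rightarrow> bool) \<Rightarrow> nat \<Rightarrow> nat set" where
  "children n adj i = {l. i < l \<and> l < n \<and> adj i l}"

lemma pivot_product_entry:
  assumes "i < n" "j < n"
  shows "(pivot_upper n adj p * pivot_lower n adj p) $$ (i, j) =
    pivot_lower n adj p $$ (i, j) + (\<Sum>l\<in>children n adj i. pivot_lower n adj p $$ (l, j) / p l)"
proof -
  let ?N = "pivot_lower n adj p"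
  have "(pivot_upper n adj p * ?N) $$ (i, j) =
      (\<Sum>l<n. pivot_upper n adj p $$ (i, l) * ?N $$ (l, j))"
    using assms by (simp add: scalar_prod_def pivot_upper_def pivot_lower_def lessThan_atLeast0)
  also have "\<dots> = (\<Sum>l<n. (if l = i then ?N $$ (l, j) else 0)
                     + (if l \<in> children n adj i then ?N $$ (l, j) / p l else 0))"
    using assms by (intro sum.cong refl) (auto simp: pivot_upper_def children_def)
  also have "\<dots> = ?N $$ (i, j) + (\<Sum>l\<in>{..<n} \<inter> children n adj i. ?N $$ (l, j) / p l)"
    using assms by (simp add: sum.distrib sum.inter_restrict)
  also have "{..<n} \<inter> children n adj i = children n adj i"
    by (auto simp: children_def)
  finally show ?thesis .
qed

lemma laplacian_char_matrix_pivot_factor: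
  assumes sym: "\<And>i j. adj i j \<Longrightarrow> adj j i" and irrefl: "\<And>i. \<not> adj i i"
    and parent_unique: "\<And>l i j. adj l i \<Longrightarrow> adj l j \<Longrightarrow> i < l \<Longrightarrow> j < l \<Longrightarrow> i = j"
    and nonzero: "\<And>i l. l \<in> children n adj i \<Longrightarrow> p l \<noteq> 0"
    and pivot: "\<And>i. i < n \<Longrightarrow>
      p i + (\<Sum>l\<in>children n adj i. 1 / p l) = x - real (degree_in n adj i)"
  shows "- char_matrix (laplacian n adj) x = pivot_upper n adj p * pivot_lower n adj p"
proof (rule eq_matI)
  fix i j assume "i < dim_row (pivot_upper n adj p * pivot_lower n adj p)"
    "j < dim_col (pivot_upper n adj p * pivot_lower n adj p)"
  then have ij: "i < n" "j < n"
    by (simp_all add: pivot_upper_def pivot_lower_def)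
  let ?N = "pivot_lower n adj p"
  have child_column:
    "?N $$ (l, j) / p l = (if j = l then 1 else 0) + (if j = i then 1 / p l else 0)"
    if l: "l \<in> children n adj i" for l
  proof -
    have "j < l \<and> adj l j \<longleftrightarrow> j = i"
      using l parent_unique sym by (auto simp: children_def)
    then show ?thesis
      using l nonzero[OF l] ij by (auto simp: pivot_lower_def children_def)
  qed
  have "(\<Sum>l\<in>children n adj i. ?N $$ (l, j) / p l) =
      (\<Sum>l\<in>children n adj i. (if j = l then 1 else 0) + (if j = i then 1 / p l else 0))"
    by (rule sum.cong[OF refl child_column])
  then have "(pivot_upper n adj p * ?N) $$ (i, j) =
      ?N $$ (i, j) + (if j \<in> children n adj i then 1 else 0)
      + (if j = i then (\<Sum>l\<in>children n adj i. 1 / p l) else 0)"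
    unfolding pivot_product_entry[OF ij]
    by (simp add: sum.distrib children_def)
  also have "\<dots> = (- char_matrix (laplacian n adj) x) $$ (i, j)"
    using ij pivot[OF ij(1)] irrefl sym
    by (auto simp: pivot_lower_def children_def char_matrix_def laplacian_def)
  finally show
    "(- char_matrix (laplacian n adj) x) $$ (i, j) = (pivot_upper n adj p * ?N) $$ (i, j)"
    by simp
qed (simp_all add: char_matrix_def laplacian_def pivot_upper_def pivot_lower_def)

lemma poly_char_poly_laplacian_pivots:
  assumes "\<And>i j. adj i j \<Longrightarrow> adj j i" "\<And>i. \<not> adj i i"
    and "\<And>l i j. adj l i \<Longrightarrow> adj l j \<Longrightarrow> i < l \<Longrightarrow> j < l \<Longrightarrow> i = j"
    and "\<And>i l. l \<in> children n adj i \<Longrightarrow> p l \<noteq> 0"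
    and "\<And>i. i < n \<Longrightarrow>
      p i + (\<Sum>l\<in>children n adj i. 1 / p l) = x - real (degree_in n adj i)"
  shows "poly (char_poly (laplacian n adj)) x = (\<Prod>i<n. p i)"
proof -
  have "laplacian n adj \<in> carrier_mat n n"
    by (simp add: laplacian_def)
  then have "poly (char_poly (laplacian n adj)) x = det (- char_matrix (laplacian n adj) x)"
    by (rule char_poly_matrix)
  also have "\<dots> = det (pivot_upper n adj p * pivot_lower n adj p)"
    by (simp only: laplacian_char_matrix_pivot_factor[OF assms])
  also have "\<dots> = (\<Prod>i<n. p i)"
    by (simp add: det_mult[OF pivot_upper_carrier pivot_lower_carrier]
        det_pivot_upper det_pivot_lower)
  finally show ?thesis .
qed

lemma spider_adj_iff:
  "spider_adj s k i j \<longleftrightarrow>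
     (i = 0 \<and> 1 \<le> j \<and> j \<le> s) \<or> (j = 0 \<and> 1 \<le> i \<and> i \<le> s) \<or>
     (1 \<le> i \<and> i \<le> k \<and> j = s + i) \<or> (1 \<le> j \<and> j \<le> k \<and> i = s + j)"
  unfolding spider_adj_def spider_edge_def by auto

lemma spider_degree:
  assumes "k \<le> s" "i < spider_vertices s k"
  shows "degree_in (spider_vertices s k) (spider_adj s k) i =
    (if i = 0 then s else if i \<le> k then 2 else 1)"
proof -
  have "{j. j < spider_vertices s k \<and> spider_adj s k i j} =
      (if i = 0 then {1..s} else if i \<le> k then {0, s + i}
       else if i \<le> s then {0} else {i - s})"
    using assms by (auto simp: spider_adj_iff spider_vertices_def)
  then show ?thesis
    using assms by (simp add: degree_in_def)
qed

lemma spider_children: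
  assumes "k \<le> s" "i < spider_vertices s k"
  shows "children (spider_vertices s k) (spider_adj s k) i =
    (if i = 0 then {1..s} else if i \<le> k then {s + i} else {})"
  using assms by (auto simp: children_def spider_adj_iff spider_vertices_def)

definition spider_pivot :: "nat \<Rightarrow> nat \<Rightarrow> real \<Rightarrow> nat \<Rightarrow> real" where
  "spider_pivot s k x i =
     (if i = 0 then x - s - k / (x - 2 - 1 / (x - 1)) - real (s - k) / (x - 1)
      else if i \<le> k then x - 2 - 1 / (x - 1) else x - 1)"

lemma poly_char_poly_spider:
  fixes x :: real
  defines "a \<equiv> x - 1" and "d \<equiv> x - 2 - 1 / (x - 1)"
  assumes "k \<le> s" "x \<noteq> 1" "x\<^sup>2 - 3 * x + 1 \<noteq> 0"
  shows "poly (char_poly (laplacian (spider_vertices s k) (spider_adj s k))) x =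
    (x - s - k / d - real (s - k) / a) * d ^ k * a ^ s"
proof -
  let ?n = "spider_vertices s k" and ?p = "spider_pivot s k x"
  have "d * a = x\<^sup>2 - 3 * x + 1"
    using assms by (simp add: a_def d_def field_simps power2_eq_square)
  then have nonzero: "a \<noteq> 0" "d \<noteq> 0"
    using assms by auto
  have pivot_rec: "?p i + (\<Sum>l\<in>children ?n (spider_adj s k) i. 1 / ?p l) =
      x - real (degree_in ?n (spider_adj s k) i)" if "i < ?n" for i
  proof -
    have "(\<Sum>l\<in>{1..s}. 1 / ?p l) = (\<Sum>l\<in>{1..s}. if l \<le> k then 1 / d else 1 / a)"
      by (intro sum.cong refl) (simp add: spider_pivot_def a_def d_def)
    also have "\<dots> = k / d + real (s - k) / a"
      by (subst sum_if_le_split[OF \<open>k \<le> s\<close>]) simp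
    finally show ?thesis
      unfolding spider_children[OF \<open>k \<le> s\<close> that] spider_degree[OF \<open>k \<le> s\<close> that]
      using \<open>k \<le> s\<close> by (auto simp: spider_pivot_def a_def d_def)
  qed
  have "poly (char_poly (laplacian ?n (spider_adj s k))) x = (\<Prod>i<?n. ?p i)"
  proof (rule poly_char_poly_laplacian_pivots)
    show "?p l \<noteq> 0" if "l \<in> children ?n (spider_adj s k) i" for i l
      using that nonzero by (auto simp: children_def spider_pivot_def a_def d_def)
  qed (use pivot_rec \<open>k \<le> s\<close> in \<open>auto simp: spider_adj_iff\<close>)
  also have "\<dots> = ?p 0 * (\<Prod>i\<in>{1..s + k}. ?p i)"
  proof -
    have "{..<?n} = insert 0 {1..s + k}"
      by (auto simp: spider_vertices_def)
    then show ?thesis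
      by simp
  qed
  also have "(\<Prod>i\<in>{1..s + k}. ?p i) = (\<Prod>i\<in>{1..s + k}. if i \<le> k then d else a)"
    by (intro prod.cong refl) (simp add: spider_pivot_def a_def d_def)
  also have "\<dots> = d ^ k * a ^ s"
    by (subst prod_if_le_split) simp_all
  also have "?p 0 = x - s - k / d - real (s - k) / a"
    by (simp add: spider_pivot_def a_def d_def)
  finally show ?thesis
    by (simp only: mult.assoc)
qed

lemma char_poly_spider_balanced:
  assumes "k \<ge> 1"
  shows "char_poly (laplacian (spider_vertices k k) (spider_adj k k)) =
    [:0, 1:] * [:1, -3, 1:] ^ (k - 1) * [:2 * real k + 1, - (real k + 3), 1:]"
proof (rule poly_eqI_cofinite)
  show "finite ({1} \<union> {x :: real. poly [:1, -3, 1:] x = 0})"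
    using poly_roots_finite[of "[:1, -3, 1:] :: real poly"] by simp
next
  fix x :: real
  assume "x \<notin> {1} \<union> {x. poly [:1, -3, 1:] x = 0}"
  then have x: "x \<noteq> 1" "x\<^sup>2 - 3 * x + 1 \<noteq> 0"
    by (auto simp: algebra_simps power2_eq_square)
  define a d where "a = x - 1" and "d = x - 2 - 1 / (x - 1)"
  have da: "d * a = x\<^sup>2 - 3 * x + 1"
    using x by (simp add: a_def d_def field_simps power2_eq_square)
  then have "d \<noteq> 0"
    using x by auto
  obtain m where m: "k = Suc m"
    using assms by (cases k) auto
  have "poly (char_poly (laplacian (spider_vertices k k) (spider_adj k k))) x =
      (x - k - k / d) * d ^ k * a ^ k"
    using poly_char_poly_spider[of k k x] x by (simp add: a_def d_def)
  also have "\<dots> = ((x - k) * (d * a) - k * a) * (d * a) ^ m"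
    using \<open>d \<noteq> 0\<close> by (simp add: m field_simps power_mult_distrib)
  also have "\<dots> =
      x * (x\<^sup>2 - (real k + 3) * x + (2 * real k + 1)) * (x\<^sup>2 - 3 * x + 1) ^ m"
    unfolding da by (simp add: a_def algebra_simps power2_eq_square)
  also have "\<dots> =
      poly ([:0, 1:] * [:1, -3, 1:] ^ (k - 1) * [:2 * real k + 1, - (real k + 3), 1:]) x"
    by (simp add: m algebra_simps power2_eq_square)
  finally show "poly (char_poly (laplacian (spider_vertices k k) (spider_adj k k))) x =
      poly ([:0, 1:] * [:1, -3, 1:] ^ (k - 1) * [:2 * real k + 1, - (real k + 3), 1:]) x" .
qed

theorem proposition3p1:
  fixes k :: nat and l1 l2 :: real
  assumes "k \<ge> 1"
    and "\<forall>x::real. x^2 - (real k + 3) * x + (2 * real k + 1) = (x - l1) * (x - l2)"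
  shows "laplacian_spectrum (spider_vertices k k) (spider_adj k k) =
           {#0#} + replicate_mset (k - 1) ((3 - sqrt 5) / 2) + {#l1#}
           + replicate_mset (k - 1) ((3 + sqrt 5) / 2) + {#l2#}"
proof -
  let ?q = "[:1, -3, 1:] :: real poly" and ?r = "[:2 * real k + 1, - (real k + 3), 1:]"
  have golden: "proots ?q = {#(3 - sqrt 5) / 2, (3 + sqrt 5) / 2#}"
    by (rule proots_monic_quadratic) (simp add: field_simps power2_eq_square)
  have lambdas: "proots ?r = {#l1, l2#}"
    by (rule proots_monic_quadratic) (use assms(2) in \<open>simp add: algebra_simps\<close>)
  have "laplacian_spectrum (spider_vertices k k) (spider_adj k k) =
      proots ([:0, 1:] * ?q ^ (k - 1) * ?r)"
    unfolding laplacian_spectrum_def char_poly_spider_balanced[OF assms(1)] ..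
  also have "\<dots> = proots [:0, 1:] + proots (?q ^ (k - 1)) + proots ?r"
    by (subst proots_mult, simp, simp, subst proots_mult, simp_all)
  also have "\<dots> =
      {#0#} + repeat_mset (k - 1) {#(3 - sqrt 5) / 2, (3 + sqrt 5) / 2#} + {#l1, l2#}"
    by (simp only: proots_power golden lambdas) simp
  finally show ?thesis
    by (simp add: add_ac)
qed

end
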